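(* Without any geometric assumption on the (shape-regular) triangulation, there exist constants $C_0,C_1,C_2>0$ depending only on shape-regularity such that, if $\gamma_0\ge C_0\sigma h_E+C_1\|\mathbf b\|_{L^\infty(\Omega)}+C_2\varepsilon h_E^{-1}$ for all $E\in\mathcal{E}_h$, then for every $u_h\in\mathcal{V}_h$ and every interior node $x_i$ with $u_h(x_i)\le u_h(x)$ for all $x\in\Omega_i$ and $u_h(x_i)<0$ (the sign condition being unnecessary if $\sigma=0$), $$\tilde a(u_h;\psi_i)\le-\sum_{E\in\mathcal{E}_i}\big(\gamma_0-C_0\sigma h_E-C_1\|\mathbf b\|_{L^\infty(\Omega)}-C_2\varepsilon h_E^{-1}\big)h_E^2\,\big|\partial_{\mathbf t}u_h|_E\big|.$$
   Context: Setting: $\Omega\subset\mathbb{R}^2$ open bounded polygonal with Lipschitz boundary; $\varepsilon>0$, $\mathbf b\in L^\infty(\Omega)^2$ divergence-free, $\sigma\ge0$ constant; $a(u,v)=\varepsilon(\nabla u,\nabla v)_\Omega+(\mathbf b\cdot\nabla u,v)_\Omega+\sigma(u,v)_\Omega$. $\mathcal{T}_h$ is a conforming triangulation from a shape-regular family, into triangles, with nodes $x_i$ and nodal basis functions $\psi_i$; $\mathcal{V}_h$ the continuous piecewise affine space. $\mathcal{E}_h$: interior edges, $h_E=|E|$, $\partial_{\mathbf t}$ tangential derivative on $E$. For an interior node $x_i$: $\mathcal{E}_i=\{E\in\mathcal{E}_h:x_i\in E\}$, $\Omega_i$ = union of triangles containing $x_i$, $S_i=\{j\neq i:x_j\text{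 shares an interior edge with }x_i\}$. $\xi_{w_h}\in\mathcal{V}_h$ has nodal values $\big|\sum_{j\in S_i}(w_h(x_i)-w_h(x_j))\big|/\sum_{j\in S_i}|w_h(x_i)-w_h(x_j)|$ (0 if the denominator vanishes); $\alpha_E(w_h)=\max_{x\in E}[\xi_{w_h}(x)]^p$ for fixed $p\in[1,\infty)$; $d_h(w_h;u_h,v_h)=\sum_{E\in\mathcal{E}_h}\gamma_0h_E^2\alpha_E(w_h)\int_E\partial_{\mathbf t}u_h\partial_{\mathbf t}v_h\,ds$ with $\gamma_0>0$; $\tilde a(w_h;v_h)=a(w_h,v_h)+d_h(w_h;w_h,v_h)$. *)

theory Defs
  imports "HOL-Analysis.Analysis" "HOL-Probability.Essential_Supremum"
begin

type_synonym pt = "real ^ 2"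

text \<open>A triangle is represented by its set of three vertices (not collinear);
  the closed triangle is its convex hull.\<close>
definition is_triangle :: "pt set \<Rightarrow> bool" where
  "is_triangle T \<longleftrightarrow> card T = 3 \<and> \<not> collinear T"

definition conforming_triangulation :: "pt set set \<Rightarrow> pt set \<Rightarrow> bool" where
  "conforming_triangulation Th Om \<longleftrightarrow>
     finite Th \<and> Th \<noteq> {} \<and> (\<forall>T\<in>Th. is_triangle T) \<and>
     closure Om = (\<Union>T\<in>Th. convex hull T) \<and>
     (\<forall>T1\<in>Th. \<forall>T2\<in>Th. T1 \<noteq> T2 \<longrightarrow>
        (convex hull T1) \<inter> (convex hull T2) = convex hull (T1 \<inter> T2))"

definition inradius :: "pt set \<Rightarrow> real" where
  "inradius T = Sup {r. \<exists>c. ball c r \<subseteq> convex hull T}"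

definition shape_regular :: "real \<Rightarrow> pt set set \<Rightarrow> bool" where
  "shape_regular \<kappa> Th \<longleftrightarrow> (\<forall>T\<in>Th. diameter (convex hull T) \<le> \<kappa> * inradius T)"

definition lipschitz_boundary :: "pt set \<Rightarrow> bool" where
  "lipschitz_boundary Om \<longleftrightarrow>
     (\<forall>x\<in>frontier Om. \<exists>r>0. \<exists>(R :: pt \<Rightarrow> pt) (L :: real) (g :: real \<Rightarrow> real).
        orthogonal_transformation R \<and> lipschitz_on L UNIV g \<and>
        (\<forall>y\<in>ball x r. y \<in> Om \<longleftrightarrow> (R (y - x)) $ 2 < g ((R (y - x)) $ 1)))"

definition nodes :: "pt set set \<Rightarrow> pt set" where
  "nodes Th = \<Union>Th"

definition interior_nodes :: "pt set set \<Rightarrow> pt set \<Rightarrow> pt set" where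
  "interior_nodes Th Om = {x \<in> nodes Th. x \<in> Om}"

text \<open>Edges are represented by their two-element vertex sets; the edge as a point set is
  its convex hull (closed segment).  Interior edges are those not contained in the
  boundary.\<close>
definition edges :: "pt set set \<Rightarrow> pt set set" where
  "edges Th = {{x, y} | x y. x \<noteq> y \<and> (\<exists>T\<in>Th. {x, y} \<subseteq> T)}"

definition interior_edges :: "pt set set \<Rightarrow> pt set \<Rightarrow> pt set set" where
  "interior_edges Th Om = {E \<in> edges Th. \<not> (convex hull E \<subseteq> frontier Om)}"

text \<open>E_i, Omega_i and S_i for a node x_i.\<close>
definition edges_at :: "pt set set \<Rightarrow> pt set \<Rightarrow> pt \<Rightarrow> pt set set" where
  "edges_at Th Om xi = {E \<in> interior_edges Th Om. xi \<in> E}"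

definition patch :: "pt set set \<Rightarrow> pt \<Rightarrow> pt set" where
  "patch Th xi = (\<Union>T\<in>{T \<in> Th. xi \<in> T}. convex hull T)"

definition neighbours :: "pt set set \<Rightarrow> pt set \<Rightarrow> pt \<Rightarrow> pt set" where
  "neighbours Th Om xi = {xj. xj \<noteq> xi \<and> {xi, xj} \<in> interior_edges Th Om}"

definition Vh :: "pt set set \<Rightarrow> (pt \<Rightarrow> real) set" where
  "Vh Th = {u. \<forall>T\<in>Th. \<exists>a c. \<forall>x\<in>convex hull T. u x = a \<bullet> x + c}"

definition nodal_interp :: "pt set set \<Rightarrow> (pt \<Rightarrow> real) \<Rightarrow> (pt \<Rightarrow> real)" where
  "nodal_interp Th f = (SOME v. v \<in> Vh Th \<and> (\<forall>x\<in>nodes Th. v x = f x))"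

definition nodal_basis :: "pt set set \<Rightarrow> pt \<Rightarrow> (pt \<Rightarrow> real)" where
  "nodal_basis Th xi = nodal_interp Th (\<lambda>x. if x = xi then 1 else 0)"

definition grad_at :: "(pt \<Rightarrow> real) \<Rightarrow> pt \<Rightarrow> pt" where
  "grad_at f x = (\<chi> i. frechet_derivative f (at x) (axis i 1))"

text \<open>C-infinity functions: differentiable everywhere with all partial derivatives
  again C-infinity (greatest fixed point).\<close>
coinductive smooth_fun :: "(pt \<Rightarrow> real) \<Rightarrow> bool" where
  "(\<forall>x. f differentiable (at x)) \<Longrightarrow>
   (\<forall>i. smooth_fun (\<lambda>x. frechet_derivative f (at x) (axis i 1))) \<Longrightarrow> smooth_fun f"

definition test_fun :: "pt set \<Rightarrow> (pt \<Rightarrow> real) \<Rightarrow> bool" where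
  "test_fun Om \<phi> \<longleftrightarrow> smooth_fun \<phi> \<and>
     (\<exists>K. compact K \<and> K \<subseteq> Om \<and> (\<forall>x. x \<notin> K \<longrightarrow> \<phi> x = 0))"

definition Linf_field :: "pt set \<Rightarrow> (pt \<Rightarrow> pt) \<Rightarrow> bool" where
  "Linf_field Om b \<longleftrightarrow> b \<in> borel_measurable (lebesgue_on Om) \<and>
     esssup (lebesgue_on Om) (\<lambda>x. ereal (norm (b x))) < \<infinity>"

definition Linf_norm :: "pt set \<Rightarrow> (pt \<Rightarrow> pt) \<Rightarrow> real" where
  "Linf_norm Om b = real_of_ereal (esssup (lebesgue_on Om) (\<lambda>x. ereal (norm (b x))))"

definition div_free :: "pt set \<Rightarrow> (pt \<Rightarrow> pt) \<Rightarrow> bool" where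
  "div_free Om b \<longleftrightarrow>
     (\<forall>\<phi>. test_fun Om \<phi> \<longrightarrow> set_lebesgue_integral lebesgue Om (\<lambda>x. b x \<bullet> grad_at \<phi> x) = 0)"

definition bilin_a :: "pt set \<Rightarrow> real \<Rightarrow> (pt \<Rightarrow> pt) \<Rightarrow> real \<Rightarrow> (pt \<Rightarrow> real) \<Rightarrow> (pt \<Rightarrow> real) \<Rightarrow> real" where
  "bilin_a Om \<epsilon> b \<sigma> u v =
     \<epsilon> * set_lebesgue_integral lebesgue Om (\<lambda>x. grad_at u x \<bullet> grad_at v x)
     + set_lebesgue_integral lebesgue Om (\<lambda>x. (b x \<bullet> grad_at u x) * v x)
     + \<sigma> * set_lebesgue_integral lebesgue Om (\<lambda>x. u x * v x)"

definition edge_ends :: "pt set \<Rightarrow> pt \<times> pt" where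
  "edge_ends E = (SOME p. E = {fst p, snd p} \<and> fst p \<noteq> snd p)"

definition edge_len :: "pt set \<Rightarrow> real" where
  "edge_len E = diameter E"

definition edge_tangent :: "pt set \<Rightarrow> pt" where
  "edge_tangent E = (1 / dist (fst (edge_ends E)) (snd (edge_ends E))) *\<^sub>R
                      (snd (edge_ends E) - fst (edge_ends E))"

definition tang_deriv :: "pt set \<Rightarrow> (pt \<Rightarrow> real) \<Rightarrow> pt \<Rightarrow> real" where
  "tang_deriv E u z = deriv (\<lambda>s. u (z + s *\<^sub>R edge_tangent E)) 0"

definition line_integral :: "pt set \<Rightarrow> (pt \<Rightarrow> real) \<Rightarrow> real" where
  "line_integral E f = integral {0 .. edge_len E}
      (\<lambda>s. f (fst (edge_ends E) + s *\<^sub>R edge_tangent E))"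

definition edge_midpoint :: "pt set \<Rightarrow> pt" where
  "edge_midpoint E = midpoint (fst (edge_ends E)) (snd (edge_ends E))"

definition xi_fun :: "pt set set \<Rightarrow> pt set \<Rightarrow> (pt \<Rightarrow> real) \<Rightarrow> (pt \<Rightarrow> real)" where
  "xi_fun Th Om w = nodal_interp Th (\<lambda>xi.
     (let den = (\<Sum>xj\<in>neighbours Th Om xi. \<bar>w xi - w xj\<bar>) in
      if den = 0 then 0 else \<bar>\<Sum>xj\<in>neighbours Th Om xi. (w xi - w xj)\<bar> / den))"

definition alpha_E :: "pt set set \<Rightarrow> pt set \<Rightarrow> real \<Rightarrow> (pt \<Rightarrow> real) \<Rightarrow> pt set \<Rightarrow> real" where
  "alpha_E Th Om p w E = Sup ((\<lambda>x. (xi_fun Th Om w x) powr p) ` (convex hull E))"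

definition d_h :: "pt set set \<Rightarrow> pt set \<Rightarrow> real \<Rightarrow> real \<Rightarrow> (pt \<Rightarrow> real) \<Rightarrow> (pt \<Rightarrow> real) \<Rightarrow> (pt \<Rightarrow> real) \<Rightarrow> real" where
  "d_h Th Om p \<gamma>0 w u v = (\<Sum>E\<in>interior_edges Th Om.
      \<gamma>0 * (edge_len E)^2 * alpha_E Th Om p w E *
      line_integral E (\<lambda>z. tang_deriv E u z * tang_deriv E v z))"

definition a_tilde :: "pt set set \<Rightarrow> pt set \<Rightarrow> real \<Rightarrow> (pt \<Rightarrow> pt) \<Rightarrow> real \<Rightarrow> real \<Rightarrow> real \<Rightarrow> (pt \<Rightarrow> real) \<Rightarrow> (pt \<Rightarrow> real) \<Rightarrow> real" where
  "a_tilde Th Om \<epsilon> b \<sigma> p \<gamma>0 w v = bilin_a Om \<epsilon> b \<sigma> w v + d_h Th Om p \<gamma>0 w w v"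

end

theory Submission
  imports Defs
begin

text \<open>The stabilization term contributes exactly \<open>-\<gamma>\<^sub>0 h\<^sub>E |u(x\<^sub>j) - u(x\<^sub>i)|\<close> on every edge
  \<open>E = {x\<^sub>i, x\<^sub>j}\<close> with a nonzero jump: at a local minimum all differences \<open>u(x\<^sub>i) - u(x\<^sub>j)\<close>
  have the same sign, so the indicator \<open>\<xi>\<close> equals 1 at \<open>x\<^sub>i\<close> and \<open>\<alpha>\<^sub>E = 1\<close>, while
  \<open>\<partial>\<^sub>t u \<partial>\<^sub>t \<psi>\<^sub>i = -|\<partial>\<^sub>t u| / h\<^sub>E\<close>.  The Galerkin form is estimated crudely, element by element:
  if a triangle \<open>T \<ni> x\<^sub>i\<close> contains a ball of radius \<open>r\<close>, the oscillation of an affine function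
  over \<open>T\<close> bounds \<open>r\<close> times its gradient, so \<open>|\<nabla>u|\<close>, \<open>|\<nabla>\<psi>\<^sub>i|\<close> and \<open>u - u(x\<^sub>i)\<close> on \<open>T\<close> are
  controlled by the jumps of \<open>u\<close> along the two edges of \<open>T\<close> at \<open>x\<^sub>i\<close>; shape regularity makes
  \<open>1/r\<close> and \<open>|T|\<^sup>1\<^sup>/\<^sup>2\<close> comparable to \<open>1/h\<^sub>E\<close> and \<open>h\<^sub>E\<close>.  The minimum property of \<open>u(x\<^sub>i)\<close> (and
  \<open>u(x\<^sub>i) < 0\<close> for the reaction term) gives the required signs.\<close>

section \<open>Affine functions on triangles\<close>

lemma affine_le_on_convex_hull:
  fixes a :: "'a::real_inner"
  assumes "\<forall>y\<in>convex hull T. f y = a \<bullet> y + c" "\<forall>v\<in>T. f v \<le> M" "x \<in> convex hull T"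
  shows "f x \<le> M"
proof -
  have "convex hull T \<subseteq> {y. a \<bullet> y \<le> M - c}"
  proof (rule hull_minimal)
    show "T \<subseteq> {y. a \<bullet> y \<le> M - c}"
      using assms(1,2) hull_subset[of T convex] by force
  qed (simp add: convex_halfspace_le)
  then show ?thesis using assms by auto
qed

lemma affine_ge_on_convex_hull:
  fixes a :: "'a::real_inner"
  assumes "\<forall>y\<in>convex hull T. f y = a \<bullet> y + c" "\<forall>v\<in>T. m \<le> f v" "x \<in> convex hull T"
  shows "m \<le> f x"
  using affine_le_on_convex_hull[of T "\<lambda>y. - f y" "- a" "- c" "- m" x] assms by auto

lemma affine_bounds_on_convex_hull:
  fixes a :: "'a::real_inner"
  assumes "\<forall>y\<in>convex hull T. f y = a \<bullet> y + c" "\<forall>v\<in>T. m \<le> f v \<and> f v \<le> M"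
  shows "\<forall>y\<in>convex hull T. m \<le> f y \<and> f y \<le> M"
  using affine_le_on_convex_hull[OF assms(1)] affine_ge_on_convex_hull[OF assms(1)] assms(2) by blast

lemma norm_affine_coeff_le_oscillation:
  fixes a :: "'a::real_inner"
  assumes "ball c r \<subseteq> S" "r > 0" "\<forall>y\<in>S. f y = a \<bullet> y + k" "\<forall>y\<in>S. m \<le> f y \<and> f y \<le> M"
  shows "r * norm a \<le> M - m"
proof (cases "a = 0")
  case True
  have "c \<in> S" using assms by auto
  then show ?thesis using True assms by force
next
  case False
  define n where "n = (1 / norm a) *\<^sub>R a"
  have n: "norm n = 1" "a \<bullet> n = norm a"
    using False by (simp_all add: n_def power2_norm_eq_inner[symmetric] power2_eq_square)
  define y1 where "y1 = c + (r/2) *\<^sub>R n"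
  define y2 where "y2 = c - (r/2) *\<^sub>R n"
  have "y1 \<in> S" "y2 \<in> S"
    using assms(1,2) n by (auto simp: y1_def y2_def dist_norm)
  then have "f y1 \<le> M" "m \<le> f y2" using assms(4) by blast+
  moreover have "f y1 - f y2 = r * norm a"
    using \<open>y1 \<in> S\<close> \<open>y2 \<in> S\<close> assms(3) n by (simp add: y1_def y2_def inner_add_right inner_diff_right)
  ultimately show ?thesis by linarith
qed

definition perp :: "pt \<Rightarrow> pt" where "perp v = vector [-(v$2), v$1]"

lemma inner_vec2: "(x::pt) \<bullet> y = x$1 * y$1 + x$2 * y$2"
  by (simp add: inner_vec_def sum_2)

lemma inner_perp: "perp v \<bullet> w = v$1 * w$2 - v$2 * w$1"
  by (simp add: perp_def inner_vec2)

lemma inner_perp_self: "perp v \<bullet> v = 0"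
  by (simp add: inner_perp)

lemma norm_perp: "norm (perp v) = norm v"
  by (simp add: norm_eq_sqrt_inner inner_perp inner_vec2 power2_eq_square algebra_simps perp_def)

lemma collinear_if_cross_eq_0:
  fixes p q s :: pt
  assumes "(q-p)$1 * (s-p)$2 - (q-p)$2 * (s-p)$1 = 0" "q \<noteq> p"
  shows "collinear {p, q, s}"
proof -
  define w1 where "w1 = q - p"
  define w2 where "w2 = s - p"
  have d: "w1$1 * w2$2 - w1$2 * w2$1 = 0" using assms(1) by (simp add: w1_def w2_def)
  have nz: "w1 \<noteq> 0" using assms(2) by (simp add: w1_def)
  have "\<exists>c. w2 = c *\<^sub>R w1"
  proof (cases "w1$1 = 0")
    case True
    then have "w1$2 \<noteq> 0" using nz by (metis exhaust_2 vec_eq_iff zero_index)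
    then have "w2 = (w2$2 / w1$2) *\<^sub>R w1"
      using d True by (simp add: vec_eq_iff forall_2)
    then show ?thesis by blast
  next
    case False
    then have "w2 = (w2$1 / w1$1) *\<^sub>R w1"
      using d by (simp add: vec_eq_iff forall_2 field_simps)
    then show ?thesis by blast
  qed
  then have "collinear {0, w1, w2}" by (simp add: collinear_lemma)
  then have "collinear {q, p, s}" by (simp add: collinear_3 w1_def w2_def)
  then show ?thesis by (simp add: insert_commute)
qed

lemma triangle_vertices:
  assumes "is_triangle T" "p \<in> T"
  obtains q s where "T = {p, q, s}" "p \<noteq> q" "p \<noteq> s" "q \<noteq> s"
proof -
  obtain x y z where "T = {x, y, z}" "x \<noteq> y" "y \<noteq> z" "x \<noteq> z"
    using assms(1) unfolding is_triangle_def card_3_iff by blast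
  with assms(2) that show ?thesis by (auto simp: insert_commute)
qed

lemma triangle_third_vertex:
  assumes "is_triangle T" "p \<in> T" "q \<in> T" "p \<noteq> q"
  obtains s where "T = {p, q, s}" "s \<noteq> p" "s \<noteq> q"
  using triangle_vertices[OF assms(1,2)] assms(3,4) by (smt (verit) insert_commute insert_iff singleton_iff)

lemma finite_triangle: "is_triangle T \<Longrightarrow> finite T"
  unfolding is_triangle_def by (metis card.infinite zero_neq_numeral)

lemma bounded_convex_hull_triangle: "is_triangle T \<Longrightarrow> bounded (convex hull T)"
  by (simp add: finite_triangle finite_imp_bounded_convex_hull)

lemma compact_convex_hull_triangle: "is_triangle T \<Longrightarrow> compact (convex hull T)"
  by (simp add: finite_triangle finite_imp_compact_convex_hull)

lemma triangle_affine_interpolation: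
  assumes "is_triangle T"
  obtains a :: pt and c where "\<forall>v\<in>T. a \<bullet> v + c = f v"
proof -
  obtain p q s where T: "T = {p, q, s}" "p \<noteq> q"
    using assms unfolding is_triangle_def card_3_iff by blast
  define w1 where "w1 = q - p"
  define w2 where "w2 = s - p"
  define d where "d = w1$1 * w2$2 - w1$2 * w2$1"
  have "d \<noteq> 0"
    using collinear_if_cross_eq_0[of q p s] assms T by (auto simp: is_triangle_def d_def w1_def w2_def)
  define a where "a = ((f s - f p) / d) *\<^sub>R perp w1 - ((f q - f p) / d) *\<^sub>R perp w2"
  have "a \<bullet> w1 = f q - f p" "a \<bullet> w2 = f s - f p"
    using \<open>d \<noteq> 0\<close> by (simp_all add: a_def inner_diff_left inner_perp_self inner_perp d_def field_simps)
  then have "\<forall>v\<in>T. a \<bullet> v + (f p - a \<bullet> p) = f v"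
    using T by (auto simp: w1_def w2_def inner_diff_right)
  then show ?thesis by (rule that)
qed

section \<open>Triangulations and the space \<open>V\<^sub>h\<close>\<close>

lemma conforming_triangulation_triangle:
  "conforming_triangulation Th Om \<Longrightarrow> T \<in> Th \<Longrightarrow> is_triangle T"
  by (simp add: conforming_triangulation_def)

lemma conforming_triangulation_finite: "conforming_triangulation Th Om \<Longrightarrow> finite Th"
  by (simp add: conforming_triangulation_def)

lemma finite_nodes: "conforming_triangulation Th Om \<Longrightarrow> finite (nodes Th)"
  unfolding nodes_def
  using conforming_triangulation_finite conforming_triangulation_triangle finite_triangle by blast

lemma node_of_element: "T \<in> Th \<Longrightarrow> x \<in> T \<Longrightarrow> x \<in> nodes Th"
  by (auto simp: nodes_def)

lemma edge_in_element: "E \<in> edges Th \<Longrightarrow> \<exists>T\<in>Th. E \<subseteq> T"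
  by (auto simp: edges_def)

lemma edge_subset_nodes: "E \<in> edges Th \<Longrightarrow> E \<subseteq> nodes Th"
  by (auto simp: edges_def nodes_def)

lemma finite_edges:
  assumes "conforming_triangulation Th Om"
  shows "finite (edges Th)"
proof -
  have "edges Th \<subseteq> Pow (nodes Th)" using edge_subset_nodes by blast
  then show ?thesis using finite_nodes[OF assms] by (meson finite_Pow_iff finite_subset)
qed

lemma edges_at_edge: "E \<in> edges_at Th Om xi \<Longrightarrow> E \<in> edges Th"
  by (simp add: edges_at_def interior_edges_def)

lemma finite_interior_edges: "conforming_triangulation Th Om \<Longrightarrow> finite (interior_edges Th Om)"
  using finite_edges by (rule finite_subset[rotated]) (auto simp: interior_edges_def)

lemma finite_edges_at: "conforming_triangulation Th Om \<Longrightarrow> finite (edges_at Th Om xi)"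
  using finite_interior_edges by (rule finite_subset[rotated]) (auto simp: edges_at_def)

lemma finite_neighbours:
  assumes "conforming_triangulation Th Om"
  shows "finite (neighbours Th Om xi)"
proof -
  have "neighbours Th Om xi \<subseteq> nodes Th"
    using edge_subset_nodes by (auto simp: neighbours_def interior_edges_def)
  then show ?thesis using finite_nodes[OF assms] finite_subset by blast
qed

lemma edges_at_obtain_neighbour:
  assumes "E \<in> edges_at Th Om xi"
  obtains xj where "E = {xi, xj}" "xj \<noteq> xi" "xj \<in> nodes Th" "xj \<in> neighbours Th Om xi"
proof -
  have E: "E \<in> interior_edges Th Om" "xi \<in> E" using assms by (auto simp: edges_at_def)
  then have "E \<in> edges Th" by (simp add: interior_edges_def)
  then obtain xj where "E = {xi, xj}" "xj \<noteq> xi"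
    using E(2) by (auto simp: edges_def doubleton_eq_iff)
  moreover have "xj \<in> nodes Th" using edge_subset_nodes[OF \<open>E \<in> edges Th\<close>] calculation by blast
  moreover have "xj \<in> neighbours Th Om xi" using E(1) calculation by (simp add: neighbours_def)
  ultimately show ?thesis by (rule that)
qed

lemma edge_vertex_in_patch:
  assumes "{xi, xj} \<in> edges Th"
  shows "xj \<in> patch Th xi"
proof -
  obtain T where "T \<in> Th" "{xi, xj} \<subseteq> T" using edge_in_element[OF assms] by blast
  then show ?thesis using hull_inc[of xj T] by (auto simp: patch_def)
qed

lemma element_in_patch: "T \<in> Th \<Longrightarrow> xi \<in> T \<Longrightarrow> convex hull T \<subseteq> patch Th xi"
  by (auto simp: patch_def)

lemma Vh_affine_on_element:
  assumes "u \<in> Vh Th" "T \<in> Th"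
  obtains a c where "\<forall>x\<in>convex hull T. u x = a \<bullet> x + c"
  using assms unfolding Vh_def by blast

text \<open>Continuity across elements: two affine interpolants of the same nodal values agree on the
  common face, which is the convex hull of the shared vertices.\<close>

lemma Vh_interpolant_exists:
  assumes ct: "conforming_triangulation Th Om"
  shows "\<exists>v\<in>Vh Th. \<forall>x\<in>nodes Th. v x = f x"
proof -
  have "\<forall>T\<in>Th. \<exists>a c. \<forall>v\<in>T. a \<bullet> v + c = f v"
  proof
    fix T assume "T \<in> Th"
    then obtain a c where "\<forall>v\<in>T. a \<bullet> v + c = f v"
      by (rule triangle_affine_interpolation[OF conforming_triangulation_triangle[OF ct]])
    then show "\<exists>a c. \<forall>v\<in>T. a \<bullet> v + c = f v" by blast
  qed
  from bchoice[OF this] obtain A where "\<forall>T\<in>Th. \<exists>c. \<forall>v\<in>T. A T \<bullet> v + c = f v"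
    by blast
  from bchoice[OF this] obtain C where "\<forall>T\<in>Th. \<forall>v\<in>T. A T \<bullet> v + C T = f v"
    by blast
  then have AC: "\<And>T v. T \<in> Th \<Longrightarrow> v \<in> T \<Longrightarrow> A T \<bullet> v + C T = f v" by blast
  have agree: "A T1 \<bullet> x + C T1 = A T2 \<bullet> x + C T2"
    if "T1 \<in> Th" "T2 \<in> Th" "x \<in> convex hull T1" "x \<in> convex hull T2" for T1 T2 x
  proof (cases "T1 = T2")
    case False
    then have "x \<in> convex hull (T1 \<inter> T2)"
      using ct that(1-4) unfolding conforming_triangulation_def by (metis IntI)
    moreover have "convex hull (T1 \<inter> T2) \<subseteq> {y. (A T1 - A T2) \<bullet> y = C T2 - C T1}"
    proof (rule hull_minimal)
      show "T1 \<inter> T2 \<subseteq> {y. (A T1 - A T2) \<bullet> y = C T2 - C T1}"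
      proof
        fix y assume "y \<in> T1 \<inter> T2"
        then have "A T1 \<bullet> y + C T1 = A T2 \<bullet> y + C T2" using AC that(1,2) by auto
        then show "y \<in> {y. (A T1 - A T2) \<bullet> y = C T2 - C T1}" by (simp add: inner_diff_left)
      qed
    qed (rule convex_hyperplane)
    ultimately have "(A T1 - A T2) \<bullet> x = C T2 - C T1" by blast
    then show ?thesis by (simp add: inner_diff_left)
  qed simp
  define v where "v x = (let T = SOME T. T \<in> Th \<and> x \<in> convex hull T in A T \<bullet> x + C T)" for x
  have vT: "v x = A T \<bullet> x + C T" if "T \<in> Th" "x \<in> convex hull T" for T x
  proof -
    let ?T = "SOME T. T \<in> Th \<and> x \<in> convex hull T"
    have "?T \<in> Th \<and> x \<in> convex hull ?T" using someI[of "\<lambda>T. T \<in> Th \<and> x \<in> convex hull T"] that by blast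
    then have "A ?T \<bullet> x + C ?T = A T \<bullet> x + C T" using agree that by blast
    then show ?thesis by (simp add: v_def)
  qed
  have "v \<in> Vh Th" unfolding Vh_def using vT by blast
  moreover have "v x = f x" if x: "x \<in> nodes Th" for x
  proof -
    obtain T where "T \<in> Th" "x \<in> T" using x by (auto simp: nodes_def)
    then show ?thesis using vT[of T x] AC[of T x] hull_inc[of x T] by simp
  qed
  ultimately show ?thesis by blast
qed

lemma
  assumes "conforming_triangulation Th Om"
  shows nodal_interp_Vh: "nodal_interp Th f \<in> Vh Th"
    and nodal_interp_node: "x \<in> nodes Th \<Longrightarrow> nodal_interp Th f x = f x"
  using someI_ex[OF Vh_interpolant_exists[OF assms, of f, unfolded Bex_def]]
  unfolding nodal_interp_def by auto

lemma
  assumes "conforming_triangulation Th Om"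
  shows nodal_basis_Vh: "nodal_basis Th xi \<in> Vh Th"
    and nodal_basis_node: "x \<in> nodes Th \<Longrightarrow> nodal_basis Th xi x = (if x = xi then 1 else 0)"
  using nodal_interp_Vh[OF assms] nodal_interp_node[OF assms] unfolding nodal_basis_def by auto

section \<open>Shape regularity\<close>

lemma shape_regular_inscribed_ball:
  assumes tri: "is_triangle T" and sr: "diameter (convex hull T) \<le> \<kappa> * inradius T"
  obtains c r where "r > 0" "ball c r \<subseteq> convex hull T" "diameter (convex hull T) \<le> 2 * \<kappa> * r"
proof -
  let ?H = "convex hull T" and ?D = "diameter (convex hull T)"
  define S where "S = {r. \<exists>c. ball c r \<subseteq> ?H}"
  have bH: "bounded ?H" using bounded_convex_hull_triangle[OF tri] .
  obtain p q s where "T = {p,q,s}" "p \<noteq> q"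
    using tri unfolding is_triangle_def card_3_iff by blast
  then have "0 < dist p q" "dist p q \<le> ?D"
    using diameter_bounded_bound[OF bH] hull_inc[of _ T] by auto
  then have D0: "?D > 0" by linarith
  have S0: "0 \<in> S" by (auto simp: S_def)
  have bdd: "bdd_above S"
  proof (rule bdd_aboveI[of _ "2 * ?D"])
    fix r assume "r \<in> S"
    then obtain c where c: "ball c r \<subseteq> ?H" by (auto simp: S_def)
    show "r \<le> 2 * ?D"
    proof (cases "r > 0")
      case True
      define e :: pt where "e = axis 1 1"
      have "c \<in> ?H" "c + (r/2) *\<^sub>R e \<in> ?H" using True c by (auto simp: e_def dist_norm)
      then have "dist c (c + (r/2) *\<^sub>R e) \<le> ?D" using diameter_bounded_bound[OF bH] by blast
      then show ?thesis using True by (simp add: e_def dist_norm)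
    qed (use D0 in simp)
  qed
  have rho: "inradius T = Sup S" by (simp add: inradius_def S_def)
  then have "inradius T \<ge> 0" using S0 bdd by (simp add: cSup_upper)
  moreover have "0 < \<kappa> * inradius T" using sr D0 by linarith
  ultimately have "inradius T > 0" "\<kappa> \<ge> 0" by (auto simp: zero_less_mult_iff)
  then have "inradius T / 2 < Sup S" using rho by simp
  then obtain r where "r \<in> S" "inradius T / 2 < r" using less_cSup_iff[of S] S0 bdd by blast
  moreover have "\<kappa> * inradius T \<le> \<kappa> * (2 * r)"
    using calculation \<open>\<kappa> \<ge> 0\<close> by (intro mult_left_mono) auto
  ultimately show ?thesis
    using that[of r] \<open>inradius T > 0\<close> sr unfolding S_def by force
qed

text \<open>The ball lies in the strip between the line through the opposite edge and its parallel
  through \<open>p\<close>, whose width is at most \<open>|p - q|\<close>.\<close>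

lemma inscribed_ball_radius_le_edge:
  assumes tri: "is_triangle T" and pq: "p \<in> T" "q \<in> T" "p \<noteq> q"
    and ball: "ball c r \<subseteq> convex hull T" and r: "r > 0"
  shows "r \<le> 2 * dist p q"
proof -
  obtain s where T: "T = {p,q,s}" "s \<noteq> q" using triangle_third_vertex[OF tri pq] by blast
  define n where "n = (1 / norm (s - q)) *\<^sub>R perp (s - q)"
  have n: "norm n = 1" "n \<bullet> (s - q) = 0" using T(2) by (simp_all add: n_def norm_perp inner_perp_self)
  define f where "f y = n \<bullet> y - n \<bullet> q" for y
  have "\<bar>f p\<bar> \<le> norm n * norm (p - q)"
    unfolding f_def inner_diff_right[symmetric] by (rule Cauchy_Schwarz_ineq2)
  then have fp: "\<bar>f p\<bar> \<le> dist p q" using n by (simp add: dist_norm)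
  have aff: "\<forall>y\<in>convex hull T. f y = n \<bullet> y + (- (n \<bullet> q))" by (simp add: f_def)
  have "\<forall>y\<in>convex hull T. - \<bar>f p\<bar> \<le> f y \<and> f y \<le> \<bar>f p\<bar>"
    by (rule affine_bounds_on_convex_hull[OF aff]) (use n in \<open>auto simp: T f_def inner_diff_right\<close>)
  from norm_affine_coeff_le_oscillation[OF ball r aff this] show ?thesis using n fp by simp
qed

lemma shape_regular_diameter_le_edge:
  assumes ct: "conforming_triangulation Th Om" and sr: "shape_regular \<kappa> Th" and T: "T \<in> Th"
    and pq: "p \<in> T" "q \<in> T" "p \<noteq> q"
  shows "diameter (convex hull T) \<le> 4 * \<kappa> * dist p q"
proof -
  have tri: "is_triangle T" using conforming_triangulation_triangle[OF ct T] .
  have "diameter (convex hull T) \<le> \<kappa> * inradius T" using sr T by (simp add: shape_regular_def)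
  then obtain c r where r: "r > 0" "ball c r \<subseteq> convex hull T" "diameter (convex hull T) \<le> 2 * \<kappa> * r"
    by (rule shape_regular_inscribed_ball[OF tri])
  have "0 \<le> (2 * \<kappa>) * r" using r(3) diameter_ge_0[OF bounded_convex_hull_triangle[OF tri]] by simp
  then have "\<kappa> \<ge> 0" using r(1) by (simp add: zero_le_mult_iff)
  moreover have "r \<le> 2 * dist p q" by (rule inscribed_ball_radius_le_edge[OF tri pq r(2,1)])
  then have "2 * \<kappa> * r \<le> 2 * \<kappa> * (2 * dist p q)" using \<open>\<kappa> \<ge> 0\<close> by (intro mult_left_mono) auto
  then show ?thesis using r(3) by simp
qed

lemma negligible_convex_hull_card_le_2:
  fixes F :: "pt set"
  assumes "finite F" "card F \<le> 2"
  shows "negligible (convex hull F)"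
proof -
  have "aff_dim (convex hull F) \<le> int (card F) - 1"
    using aff_dim_le_card[OF assms(1)] by (simp add: aff_dim_convex_hull)
  also have "\<dots> < int DIM(pt)" using assms(2) by simp
  finally have "interior (convex hull F) = {}" using aff_dim_nonempty_interior by fastforce
  then show ?thesis using negligible_convex_interior[of "convex hull F"] by (simp add: convex_convex_hull)
qed

lemma negligible_element_intersection:
  assumes ct: "conforming_triangulation Th Om" and T: "T1 \<in> Th" "T2 \<in> Th" "T1 \<noteq> T2"
  shows "negligible (convex hull T1 \<inter> convex hull T2)"
proof -
  have tri: "is_triangle T1" "is_triangle T2" using conforming_triangulation_triangle[OF ct] T by auto
  then have fin: "finite T1" "finite T2" and c3: "card T1 = 3" "card T2 = 3"
    by (auto simp: finite_triangle is_triangle_def)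
  have "card (T1 \<inter> T2) \<le> 2"
  proof (rule ccontr)
    assume "\<not> card (T1 \<inter> T2) \<le> 2"
    moreover have "card (T1 \<inter> T2) \<le> 3" using card_mono[OF fin(1), of "T1 \<inter> T2"] c3 by auto
    ultimately have "T1 \<inter> T2 = T1" "T1 \<inter> T2 = T2"
      using card_subset_eq[OF fin(1), of "T1 \<inter> T2"] card_subset_eq[OF fin(2), of "T1 \<inter> T2"] c3 by auto
    then show False using T(3) by simp
  qed
  then have "negligible (convex hull (T1 \<inter> T2))"
    using negligible_convex_hull_card_le_2 fin by simp
  then show ?thesis using ct T unfolding conforming_triangulation_def by metis
qed

lemma lmeasurable_element:
  "conforming_triangulation Th Om \<Longrightarrow> T \<in> Th \<Longrightarrow> convex hull T \<in> lmeasurable"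
  using conforming_triangulation_triangle compact_convex_hull_triangle lmeasurable_compact by blast

text \<open>The elements sharing an edge of length \<open>h\<close> overlap only in null sets and lie in a disc
  of radius \<open>4 \<kappa> h\<close> around an endpoint.\<close>

lemma measure_elements_at_edge_le:
  assumes ct: "conforming_triangulation Th Om" and sr: "shape_regular \<kappa> Th"
    and pq: "p \<noteq> q" and \<kappa>: "\<kappa> > 0"
  shows "(\<Sum>T\<in>{T\<in>Th. {p,q} \<subseteq> T}. measure lebesgue (convex hull T)) \<le> 64 * \<kappa>^2 * (dist p q)^2"
proof -
  let ?Q = "{T\<in>Th. {p,q} \<subseteq> T}"
  define R where "R = 4 * \<kappa> * dist p q"
  have finQ: "finite ?Q" using conforming_triangulation_finite[OF ct] by simp
  have lm: "convex hull T \<in> lmeasurable" if "T \<in> ?Q" for T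
    using lmeasurable_element[OF ct] that by blast
  have "(\<Sum>T\<in>?Q. measure lebesgue (convex hull T)) = measure lebesgue (\<Union>T\<in>?Q. convex hull T)"
    by (rule measure_negligible_finite_Union_image[symmetric, OF finQ])
       (use lm negligible_element_intersection[OF ct] in \<open>auto simp: pairwise_def\<close>)
  also have "\<dots> \<le> measure lebesgue (cball p R)"
  proof (rule measure_mono_fmeasurable)
    show "(\<Union>T\<in>?Q. convex hull T) \<subseteq> cball p R"
    proof clarify
      fix T y assume T: "T \<in> Th" "{p,q} \<subseteq> T" and y: "y \<in> convex hull T"
      have "p \<in> convex hull T" using T hull_inc[of p T] by auto
      then have "dist p y \<le> diameter (convex hull T)"
        using diameter_bounded_bound[OF bounded_convex_hull_triangle] conforming_triangulation_triangle[OF ct T(1)] y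
        by blast
      also have "\<dots> \<le> R"
        using shape_regular_diameter_le_edge[OF ct sr T(1) _ _ pq] T(2) by (simp add: R_def)
      finally show "y \<in> cball p R" by simp
    qed
    show "(\<Union>T\<in>?Q. convex hull T) \<in> sets lebesgue" using lm finQ by (intro sets.finite_UN) auto
  qed simp
  also have "\<dots> = measure lborel (ball p R)"
    by (simp add: measure_completion content_cball_conv_ball)
  also have "\<dots> = R^2 * pi" using \<kappa> by (intro circle_area) (simp add: R_def)
  also have "\<dots> \<le> R^2 * 4" using pi_less_4 by (intro mult_left_mono) auto
  also have "\<dots> = 64 * \<kappa>^2 * (dist p q)^2" by (simp add: R_def power_mult_distrib)
  finally show ?thesis .
qed

section \<open>Derivatives along edges\<close>

lemma grad_at_affine:
  fixes a :: pt
  assumes "x \<in> interior S" "\<forall>y\<in>S. u y = a \<bullet> y + c"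
  shows "grad_at u x = a"
proof -
  have "((\<lambda>y. a \<bullet> y + c) has_derivative (\<lambda>h. a \<bullet> h)) (at x)"
    by (auto intro!: derivative_eq_intros)
  then have "(u has_derivative (\<lambda>h. a \<bullet> h)) (at x)"
    by (rule has_derivative_transform_within_open[OF _ open_interior assms(1)])
       (use assms(2) interior_subset in fastforce)
  then have "frechet_derivative u (at x) = (\<lambda>h. a \<bullet> h)" using frechet_derivative_at by metis
  then show ?thesis by (simp add: grad_at_def vec_eq_iff inner_axis)
qed

lemma deriv_affine_along_segment:
  fixes A p t :: "'a::real_inner"
  assumes "\<forall>s. 0 \<le> s \<and> s \<le> h \<longrightarrow> u (p + s *\<^sub>R t) = A \<bullet> (p + s *\<^sub>R t) + c" "0 < s0" "s0 < h"
  shows "deriv (\<lambda>s. u ((p + s0 *\<^sub>R t) + s *\<^sub>R t)) 0 = A \<bullet> t"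
proof -
  have "((\<lambda>s. A \<bullet> ((p + s0 *\<^sub>R t) + s *\<^sub>R t) + c) has_field_derivative A \<bullet> t) (at 0)"
    by (auto intro!: derivative_eq_intros simp: inner_add_right)
  then have "((\<lambda>s. u ((p + s0 *\<^sub>R t) + s *\<^sub>R t)) has_field_derivative A \<bullet> t) (at 0)"
  proof (rule has_field_derivative_transform_within_open[of _ _ _ "{-s0<..<h-s0}"])
    fix s :: real assume "s \<in> {-s0<..<h-s0}"
    then have "u (p + (s0 + s) *\<^sub>R t) = A \<bullet> (p + (s0 + s) *\<^sub>R t) + c" using assms(1) by auto
    then show "A \<bullet> ((p + s0 *\<^sub>R t) + s *\<^sub>R t) + c = u ((p + s0 *\<^sub>R t) + s *\<^sub>R t)"
      by (simp add: scaleR_add_left add.assoc)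
  qed (use assms in auto)
  then show ?thesis by (rule DERIV_imp_deriv)
qed

lemma diameter_doubleton: "diameter {p, q::'a::real_normed_vector} = dist p q"
proof (rule antisym)
  show "diameter {p, q} \<le> dist p q"
    by (rule diameter_le) (auto simp: dist_norm norm_minus_commute)
  show "dist p q \<le> diameter {p, q}"
    by (rule diameter_bounded_bound) auto
qed

lemma
  assumes "E \<in> edges Th"
  shows edge_ends: "E = {fst (edge_ends E), snd (edge_ends E)}"
    and edge_ends_neq: "fst (edge_ends E) \<noteq> snd (edge_ends E)"
proof -
  obtain x y where "E = {x,y}" "x \<noteq> y" using assms by (auto simp: edges_def)
  then have "\<exists>p. E = {fst p, snd p} \<and> fst p \<noteq> snd p" by (intro exI[of _ "(x,y)"]) auto
  then have "E = {fst (edge_ends E), snd (edge_ends E)} \<and> fst (edge_ends E) \<noteq> snd (edge_ends E)"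
    unfolding edge_ends_def by (rule someI_ex)
  then show "E = {fst (edge_ends E), snd (edge_ends E)}" "fst (edge_ends E) \<noteq> snd (edge_ends E)"
    by auto
qed

lemma edge_len_eq_dist: "E \<in> edges Th \<Longrightarrow> edge_len E = dist (fst (edge_ends E)) (snd (edge_ends E))"
  using edge_ends diameter_doubleton unfolding edge_len_def by metis

lemma edge_len_pos: "E \<in> edges Th \<Longrightarrow> edge_len E > 0"
  using edge_len_eq_dist edge_ends_neq by simp

lemma tang_deriv_Vh:
  assumes E: "E \<in> edges Th" and w: "w \<in> Vh Th" and s: "0 < s" "s < edge_len E"
  defines "p1 \<equiv> fst (edge_ends E)" and "p2 \<equiv> snd (edge_ends E)"
  shows "tang_deriv E w (p1 + s *\<^sub>R edge_tangent E) = (w p2 - w p1) / edge_len E"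
proof -
  define h where "h = edge_len E"
  define t where "t = edge_tangent E"
  have Ep: "E = {p1, p2}" "h = dist p1 p2" "h > 0"
    using edge_ends[OF E] edge_len_eq_dist[OF E] edge_len_pos[OF E] by (auto simp: p1_def p2_def h_def)
  have t: "t = (1 / h) *\<^sub>R (p2 - p1)" using Ep(2) by (simp add: t_def edge_tangent_def p1_def p2_def)
  obtain T where T: "T \<in> Th" "{p1, p2} \<subseteq> T" using edge_in_element[OF E] Ep(1) by blast
  obtain A c where Ac: "\<forall>x\<in>convex hull T. w x = A \<bullet> x + c" using Vh_affine_on_element[OF w T(1)] .
  have "p1 + s *\<^sub>R t \<in> convex hull T" if "0 \<le> s" "s \<le> h" for s
  proof -
    have "p1 + s *\<^sub>R t = (1 - s/h) *\<^sub>R p1 + (s/h) *\<^sub>R p2" using Ep(3) by (simp add: t algebra_simps)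
    also have "\<dots> \<in> closed_segment p1 p2"
      using that Ep(3) unfolding closed_segment_def by (auto intro!: exI[of _ "s/h"])
    also have "closed_segment p1 p2 \<subseteq> convex hull T"
      using T(2) by (simp add: segment_convex_hull hull_mono)
    finally show ?thesis .
  qed
  then have "deriv (\<lambda>r. w ((p1 + s *\<^sub>R t) + r *\<^sub>R t)) 0 = A \<bullet> t"
    by (intro deriv_affine_along_segment[where h = h and c = c]) (use Ac s in \<open>auto simp: h_def\<close>)
  moreover have "A \<bullet> t = (w p2 - w p1) / h"
    using Ac T(2) hull_inc[of _ T] by (simp add: t inner_diff_right divide_inverse algebra_simps)
  ultimately show ?thesis by (simp add: tang_deriv_def t_def h_def)
qed

lemma tang_deriv_midpoint:
  assumes "E \<in> edges Th" "u \<in> Vh Th"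
  shows "tang_deriv E u (edge_midpoint E)
           = (u (snd (edge_ends E)) - u (fst (edge_ends E))) / edge_len E"
proof -
  let ?p1 = "fst (edge_ends E)" and ?p2 = "snd (edge_ends E)" and ?h = "edge_len E"
  have h: "?h = dist ?p1 ?p2" "?h > 0"
    using edge_len_eq_dist[OF assms(1)] edge_len_pos[OF assms(1)] by auto
  have "edge_midpoint E = ?p1 + (?h/2) *\<^sub>R edge_tangent E"
    using h by (simp add: edge_midpoint_def edge_tangent_def midpoint_def vec_eq_iff algebra_simps)
  then show ?thesis using tang_deriv_Vh[OF assms, of "?h/2"] h(2) by simp
qed

lemma line_integral_tang_deriv:
  assumes E: "E \<in> edges Th" and "u \<in> Vh Th" "v \<in> Vh Th"
  defines "p1 \<equiv> fst (edge_ends E)" and "p2 \<equiv> snd (edge_ends E)"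
  shows "line_integral E (\<lambda>z. tang_deriv E u z * tang_deriv E v z)
           = (u p2 - u p1) * (v p2 - v p1) / edge_len E"
proof -
  let ?h = "edge_len E" and ?t = "edge_tangent E"
  have "line_integral E (\<lambda>z. tang_deriv E u z * tang_deriv E v z)
      = integral {0..?h} (\<lambda>s. tang_deriv E u (p1 + s *\<^sub>R ?t) * tang_deriv E v (p1 + s *\<^sub>R ?t))"
    by (simp add: line_integral_def p1_def)
  also have "\<dots> = integral {0..?h} (\<lambda>s. ((u p2 - u p1) / ?h) * ((v p2 - v p1) / ?h))"
    by (rule integral_spike[of "{0, ?h}"])
       (use tang_deriv_Vh[OF E] assms(2,3) in \<open>auto simp: p1_def p2_def\<close>)
  also have "\<dots> = (u p2 - u p1) * (v p2 - v p1) / ?h"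
    using edge_len_pos[OF E] by (simp add: power2_eq_square field_simps)
  finally show ?thesis .
qed

section \<open>The stabilization term\<close>

definition edge_jump :: "(pt \<Rightarrow> real) \<Rightarrow> pt set \<Rightarrow> real" where
  "edge_jump u E = \<bar>u (snd (edge_ends E)) - u (fst (edge_ends E))\<bar>"

lemma
  assumes "E \<in> edges Th" "E = {x, y}"
  shows edge_jump_doubleton: "edge_jump u E = \<bar>u y - u x\<bar>"
    and edge_len_doubleton: "edge_len E = dist x y"
proof -
  have "{fst (edge_ends E), snd (edge_ends E)} = {x, y}" using edge_ends[OF assms(1)] assms(2) by auto
  then show "edge_jump u E = \<bar>u y - u x\<bar>" "edge_len E = dist x y"
    using edge_len_eq_dist[OF assms(1)] unfolding edge_jump_def doubleton_eq_iff
    by (auto simp: dist_commute)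
qed

lemma edge_jump_nonneg: "edge_jump u E \<ge> 0"
  by (simp add: edge_jump_def)

lemma xi_fun_node:
  assumes "conforming_triangulation Th Om" "xi \<in> nodes Th"
  shows "xi_fun Th Om w xi = (let den = (\<Sum>xj\<in>neighbours Th Om xi. \<bar>w xi - w xj\<bar>) in
      if den = 0 then 0 else \<bar>\<Sum>xj\<in>neighbours Th Om xi. (w xi - w xj)\<bar> / den)"
  unfolding xi_fun_def by (rule nodal_interp_node[OF assms])

lemma xi_fun_bounds:
  assumes ct: "conforming_triangulation Th Om" and T: "T \<in> Th" and x: "x \<in> convex hull T"
  shows "0 \<le> xi_fun Th Om w x \<and> xi_fun Th Om w x \<le> 1"
proof -
  have "0 \<le> xi_fun Th Om w y \<and> xi_fun Th Om w y \<le> 1" if "y \<in> nodes Th" for y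
    using sum_abs[of "\<lambda>xj. w y - w xj" "neighbours Th Om y"]
    by (auto simp: xi_fun_node[OF ct that] Let_def divide_le_eq_1)
  moreover obtain a c where "\<forall>y\<in>convex hull T. xi_fun Th Om w y = a \<bullet> y + c"
    using Vh_affine_on_element[OF nodal_interp_Vh[OF ct] T] unfolding xi_fun_def by blast
  ultimately show ?thesis
    using affine_bounds_on_convex_hull[of T "xi_fun Th Om w" a c 0 1] node_of_element[OF T] x by blast
qed

text \<open>All differences \<open>w x\<^sub>j - w x\<^sub>i\<close> are nonnegative, so numerator and denominator of \<open>\<xi>\<close>
  coincide.\<close>

lemma xi_fun_eq_1_at_local_min:
  assumes ct: "conforming_triangulation Th Om" and xin: "xi \<in> nodes Th"
    and min: "\<forall>xj\<in>neighbours Th Om xi. w xi \<le> w xj"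
    and j0: "xj0 \<in> neighbours Th Om xi" "w xj0 \<noteq> w xi"
  shows "xi_fun Th Om w xi = 1"
proof -
  let ?N = "neighbours Th Om xi"
  have abs: "(\<Sum>xj\<in>?N. \<bar>w xi - w xj\<bar>) = (\<Sum>xj\<in>?N. w xj - w xi)"
    using min by (intro sum.cong) auto
  have "(\<Sum>xj\<in>?N. w xi - w xj) = - (\<Sum>xj\<in>?N. w xj - w xi)" by (simp add: sum_negf[symmetric])
  moreover have "0 < w xj0 - w xi" using min j0 by force
  moreover have "w xj0 - w xi \<le> (\<Sum>xj\<in>?N. w xj - w xi)"
    using min finite_neighbours[OF ct] j0(1) by (intro member_le_sum) auto
  ultimately show ?thesis using abs by (simp add: xi_fun_node[OF ct xin] Let_def)
qed

lemma alpha_E_ge_1: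
  assumes ct: "conforming_triangulation Th Om" and E: "E \<in> edges Th" "xi \<in> E"
    and one: "xi_fun Th Om w xi = 1" and p: "p \<ge> 1"
  shows "alpha_E Th Om p w E \<ge> 1"
proof -
  obtain T where T: "T \<in> Th" "E \<subseteq> T" using edge_in_element[OF E(1)] by blast
  let ?S = "(\<lambda>x. (xi_fun Th Om w x) powr p) ` (convex hull E)"
  have "bdd_above ?S"
  proof (rule bdd_aboveI[of _ 1])
    fix y assume "y \<in> ?S"
    then obtain x where x: "x \<in> convex hull E" "y = (xi_fun Th Om w x) powr p" by auto
    then have "\<bar>xi_fun Th Om w x\<bar> \<le> 1"
      using xi_fun_bounds[OF ct T(1)] hull_mono[OF T(2)] by force
    then show "y \<le> 1" using x(2) p powr_le1[of p "xi_fun Th Om w x"] by simp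
  qed
  moreover have "1 \<in> ?S"
    using one E(2) hull_inc[of xi E] by (force intro: image_eqI[where x = xi])
  ultimately show ?thesis unfolding alpha_E_def by (rule cSup_upper[rotated])
qed

lemma d_h_nodal_basis_eq:
  assumes ct: "conforming_triangulation Th Om" and xin: "xi \<in> nodes Th" and u: "u \<in> Vh Th"
    and min: "\<forall>x\<in>patch Th xi. u xi \<le> u x"
  shows "d_h Th Om p \<gamma>0 u u (nodal_basis Th xi)
           = - (\<Sum>E\<in>edges_at Th Om xi. \<gamma>0 * edge_len E * alpha_E Th Om p u E * edge_jump u E)"
proof -
  let ?psi = "nodal_basis Th xi" and ?EA = "edges_at Th Om xi"
  define t where "t E = \<gamma>0 * (edge_len E)^2 * alpha_E Th Om p u E *
      line_integral E (\<lambda>z. tang_deriv E u z * tang_deriv E ?psi z)" for E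
  have LI: "line_integral E (\<lambda>z. tang_deriv E u z * tang_deriv E ?psi z)
     = (u (snd (edge_ends E)) - u (fst (edge_ends E))) * (?psi (snd (edge_ends E)) - ?psi (fst (edge_ends E)))
       / edge_len E" if "E \<in> edges Th" for E
    using line_integral_tang_deriv[OF that u nodal_basis_Vh[OF ct]] by simp
  have off: "t E = 0" if "E \<in> interior_edges Th Om - ?EA" for E
  proof -
    have E: "E \<in> edges Th" "xi \<notin> E" using that by (auto simp: interior_edges_def edges_at_def)
    have "fst (edge_ends E) \<in> nodes Th - {xi}" "snd (edge_ends E) \<in> nodes Th - {xi}"
      using E edge_ends[OF E(1)] edge_subset_nodes[OF E(1)] by auto
    then show ?thesis using LI[OF E(1)] by (simp add: t_def nodal_basis_node[OF ct])
  qed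
  have on: "t E = - (\<gamma>0 * edge_len E * alpha_E Th Om p u E * edge_jump u E)" if E: "E \<in> ?EA" for E
  proof -
    obtain xj where xj: "E = {xi, xj}" "xj \<noteq> xi" "xj \<in> nodes Th"
      using edges_at_obtain_neighbour[OF E] by blast
    have Ee: "E \<in> edges Th" by (rule edges_at_edge[OF E])
    have "u xi \<le> u xj" using min edge_vertex_in_patch Ee xj(1) by blast
    then have "(u (snd (edge_ends E)) - u (fst (edge_ends E))) * (?psi (snd (edge_ends E)) - ?psi (fst (edge_ends E)))
        = - edge_jump u E"
      using edge_ends[OF Ee] xj nodal_basis_node[OF ct] xin
      by (auto simp: edge_jump_def doubleton_eq_iff)
    then show ?thesis
      using LI[OF Ee] edge_len_pos[OF Ee] by (simp add: t_def power2_eq_square)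
  qed
  have "d_h Th Om p \<gamma>0 u u ?psi = (\<Sum>E\<in>?EA. t E)"
    unfolding d_h_def t_def[symmetric]
    by (rule sum.mono_neutral_right[OF finite_interior_edges[OF ct]])
       (use off in \<open>auto simp: edges_at_def\<close>)
  also have "\<dots> = - (\<Sum>E\<in>?EA. \<gamma>0 * edge_len E * alpha_E Th Om p u E * edge_jump u E)"
    using on by (simp add: sum_negf[symmetric])
  finally show ?thesis .
qed

lemma d_h_nodal_basis_le:
  assumes ct: "conforming_triangulation Th Om" and xin: "xi \<in> nodes Th" and u: "u \<in> Vh Th"
    and min: "\<forall>x\<in>patch Th xi. u xi \<le> u x" and \<gamma>0: "\<gamma>0 \<ge> 0" and p: "p \<ge> 1"
  shows "d_h Th Om p \<gamma>0 u u (nodal_basis Th xi)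
           \<le> - (\<Sum>E\<in>edges_at Th Om xi. \<gamma>0 * edge_len E * edge_jump u E)"
proof -
  have "\<gamma>0 * edge_len E * edge_jump u E \<le> \<gamma>0 * edge_len E * alpha_E Th Om p u E * edge_jump u E"
    if E: "E \<in> edges_at Th Om xi" for E
  proof (cases "edge_jump u E = 0")
    case False
    obtain xj where xj: "E = {xi, xj}" "xj \<in> neighbours Th Om xi"
      using edges_at_obtain_neighbour[OF E] by blast
    have Ee: "E \<in> edges Th" by (rule edges_at_edge[OF E])
    have "u xj \<noteq> u xi" using False edge_jump_doubleton[OF Ee xj(1)] by auto
    moreover have "\<forall>y\<in>neighbours Th Om xi. u xi \<le> u y"
      using min edge_vertex_in_patch by (auto simp: neighbours_def interior_edges_def)
    ultimately have "xi_fun Th Om u xi = 1" using xi_fun_eq_1_at_local_min[OF ct xin _ xj(2)] by blast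
    then have "alpha_E Th Om p u E \<ge> 1" using alpha_E_ge_1[OF ct Ee _ _ p] xj(1) by blast
    moreover have "0 \<le> \<gamma>0 * edge_len E * edge_jump u E"
      using \<gamma>0 edge_len_pos[OF Ee] edge_jump_nonneg by simp
    ultimately show ?thesis
      using mult_left_mono[of 1 "alpha_E Th Om p u E" "\<gamma>0 * edge_len E * edge_jump u E"]
      by (simp add: mult_ac)
  qed simp
  then show ?thesis
    unfolding d_h_nodal_basis_eq[OF ct xin u min] by (simp add: sum_mono)
qed

section \<open>Element-wise bounds for the Galerkin form\<close>

lemma
  assumes "open Om" "Om \<noteq> {}" "Linf_field Om b"
  shows Linf_norm_nonneg: "Linf_norm Om b \<ge> 0"
    and AE_norm_le_Linf_norm: "AE x in lebesgue. x \<in> Om \<longrightarrow> norm (b x) \<le> Linf_norm Om b"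
proof -
  let ?M = "lebesgue_on Om" and ?f = "\<lambda>x. ereal (norm (b x))"
  have Om: "Om \<in> sets lebesgue" using assms(1) by (simp add: borel_open)
  have "\<not> negligible Om" using open_not_negligible assms(1,2) by blast
  then have "emeasure ?M (space ?M) \<noteq> 0"
    using Om by (simp add: negligible_iff_null_sets null_sets_def emeasure_restrict_space)
  then have "0 \<le> esssup ?M ?f"
    using esssup_mono[of "\<lambda>x. 0::ereal" ?M ?f] esssup_const[of ?M "0::ereal"] by simp
  moreover have "esssup ?M ?f < \<infinity>" using assms(3) by (simp add: Linf_field_def)
  ultimately have eq: "ereal (Linf_norm Om b) = esssup ?M ?f"
    by (simp add: Linf_norm_def ereal_real)
  with \<open>0 \<le> esssup ?M ?f\<close> show "Linf_norm Om b \<ge> 0" by (metis ereal_less_eq(5))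
  have "AE x in ?M. ?f x \<le> esssup ?M ?f" by (rule esssup_AE)
  then have "AE x in ?M. norm (b x) \<le> Linf_norm Om b" unfolding eq[symmetric] by simp
  then show "AE x in lebesgue. x \<in> Om \<longrightarrow> norm (b x) \<le> Linf_norm Om b"
    using Om by (simp add: AE_restrict_space_iff)
qed

lemma element_interior_cover:
  assumes ct: "conforming_triangulation Th Om"
  shows "AE x in lebesgue. x \<in> Om \<longrightarrow> (\<exists>T\<in>Th. x \<in> interior (convex hull T))"
proof -
  have "negligible (\<Union>T\<in>Th. frontier (convex hull T))"
    using conforming_triangulation_finite[OF ct]
    by (intro negligible_Union) (auto intro: negligible_convex_frontier)
  then have "AE x in lebesgue. x \<notin> (\<Union>T\<in>Th. frontier (convex hull T))"
    by (intro AE_I') (auto simp: negligible_iff_null_sets)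
  then show ?thesis
  proof (rule eventually_mono, intro impI)
    fix x assume x: "x \<notin> (\<Union>T\<in>Th. frontier (convex hull T))" "x \<in> Om"
    have "closure Om = (\<Union>T\<in>Th. convex hull T)" using ct by (simp add: conforming_triangulation_def)
    then obtain T where T: "T \<in> Th" "x \<in> convex hull T" using x(2) closure_subset by blast
    then have "x \<in> interior (convex hull T)"
      using x(1) compact_convex_hull_triangle[OF conforming_triangulation_triangle[OF ct T(1)]]
      by (auto simp: frontier_def compact_imp_closed)
    with T(1) show "\<exists>T\<in>Th. x \<in> interior (convex hull T)" by blast
  qed
qed

lemma set_integral_le_element_sum:
  assumes ct: "conforming_triangulation Th Om" and P: "P \<subseteq> Th"
    and K: "\<And>T. T \<in> P \<Longrightarrow> K T \<ge> 0"
    and f: "AE x in lebesgue. x \<in> Om \<longrightarrow>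
              (\<forall>T\<in>Th. x \<in> interior (convex hull T) \<longrightarrow> f x \<le> (if T \<in> P then K T else 0))"
  shows "set_lebesgue_integral lebesgue Om f \<le> (\<Sum>T\<in>P. K T * measure lebesgue (convex hull T))"
proof -
  have finP: "finite P" using conforming_triangulation_finite[OF ct] P finite_subset by blast
  define g where "g x = (\<Sum>T\<in>P. indicator (convex hull T) x * K T)" for x
  have g0: "g x \<ge> 0" for x unfolding g_def using K by (intro sum_nonneg) auto
  have int: "integrable lebesgue (\<lambda>x. indicator (convex hull T) x * K T)" if "T \<in> P" for T
    using lmeasurable_element[OF ct] that P
    by (intro integrable_mult_left integrable_real_indicator) (auto simp: fmeasurable_def)
  then have g_int: "integrable lebesgue g" unfolding g_def by (rule Bochner_Integration.integrable_sum)
  have g_eq: "integral\<^sup>L lebesgue g = (\<Sum>T\<in>P. K T * measure lebesgue (convex hull T))"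
    unfolding g_def by (subst Bochner_Integration.integral_sum[OF int]) (auto simp: mult.commute)
  have le_g: "AE x in lebesgue. indicator Om x *\<^sub>R f x \<le> g x"
    using f element_interior_cover[OF ct]
  proof eventually_elim
    case (elim x)
    show ?case
    proof (cases "x \<in> Om")
      case True
      then obtain T where T: "T \<in> Th" "x \<in> interior (convex hull T)" using elim(2) by blast
      then have "x \<in> convex hull T" using interior_subset by blast
      then have "T \<in> P \<Longrightarrow> K T \<le> g x"
        unfolding g_def using member_le_sum[of T P "\<lambda>T. indicator (convex hull T) x * K T"] K finP
        by auto
      then show ?thesis using elim(1) T True g0[of x] by (auto split: if_splits)
    qed (use g0 in simp)
  qed
  show ?thesis
  proof (cases "integrable lebesgue (\<lambda>x. indicator Om x *\<^sub>R f x)")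
    case False
    then show ?thesis using g_eq integral_nonneg_AE[of g lebesgue] g0
      by (simp add: set_lebesgue_integral_def not_integrable_integral_eq)
  next
    case True
    then show ?thesis using integral_mono_AE[OF True g_int le_g] g_eq
      by (simp add: set_lebesgue_integral_def)
  qed
qed

definition element_jump_sum ::
    "pt set set \<Rightarrow> pt set \<Rightarrow> pt \<Rightarrow> (pt \<Rightarrow> real) \<Rightarrow> (real \<Rightarrow> real) \<Rightarrow> pt set \<Rightarrow> real" where
  "element_jump_sum Th Om xi u w T =
     (\<Sum>E\<in>{E\<in>edges_at Th Om xi. E \<subseteq> T}. edge_jump u E * w (edge_len E))"

lemma element_jump_sum_nonneg:
  "(\<And>h. h > 0 \<Longrightarrow> w h \<ge> 0) \<Longrightarrow> element_jump_sum Th Om xi u w T \<ge> 0"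
  unfolding element_jump_sum_def
  by (intro sum_nonneg) (auto intro!: mult_nonneg_nonneg edge_jump_nonneg edge_len_pos dest: edges_at_edge)

lemma edges_at_vertex_edge:
  assumes "T \<in> Th" "xi \<in> T" "v \<in> T" "v \<noteq> xi" "xi \<in> Om" "open Om"
  shows "{xi, v} \<in> edges_at Th Om xi"
proof -
  have "{xi, v} \<in> edges Th" unfolding edges_def using assms(1-4) by blast
  moreover have "xi \<notin> frontier Om" using assms(5,6) by (simp add: frontier_def interior_open)
  then have "\<not> convex hull {xi, v} \<subseteq> frontier Om" using hull_inc[of xi "{xi, v}"] by blast
  ultimately show ?thesis by (simp add: edges_at_def interior_edges_def)
qed

lemma element_jump_sum_ge_two_edges:
  assumes T: "T \<in> Th" "T = {xi, j, k}" "xi \<noteq> j" "xi \<noteq> k" "j \<noteq> k"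
    and Om: "xi \<in> Om" "open Om" and ct: "conforming_triangulation Th Om"
    and w: "\<And>h. h > 0 \<Longrightarrow> w h \<ge> 0"
  shows "\<bar>u j - u xi\<bar> * w (dist xi j) + \<bar>u k - u xi\<bar> * w (dist xi k)
           \<le> element_jump_sum Th Om xi u w T"
proof -
  let ?F = "{E\<in>edges_at Th Om xi. E \<subseteq> T}"
  have Ej: "{xi, j} \<in> edges_at Th Om xi" and Ek: "{xi, k} \<in> edges_at Th Om xi"
    using edges_at_vertex_edge[OF T(1) _ _ _ Om] T by auto
  have "\<forall>E\<in>?F. 0 \<le> edge_jump u E * w (edge_len E)"
    using w edge_jump_nonneg edge_len_pos by (blast dest: edges_at_edge intro: mult_nonneg_nonneg)
  moreover have "{{xi, j}, {xi, k}} \<subseteq> ?F" using Ej Ek T by auto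
  ultimately have "(\<Sum>E\<in>{{xi, j}, {xi, k}}. edge_jump u E * w (edge_len E)) \<le> element_jump_sum Th Om xi u w T"
    unfolding element_jump_sum_def using finite_edges_at[OF ct] by (intro sum_mono2) auto
  moreover have "{xi, j} \<noteq> {xi, k}" using T by (auto simp: doubleton_eq_iff)
  ultimately show ?thesis
    using edges_at_edge[OF Ej] edges_at_edge[OF Ek]
    by (simp add: edge_jump_doubleton edge_len_doubleton)
qed

text \<open>Swap the order of summation: each edge at \<open>x\<^sub>i\<close> is counted once for each element containing
  it, and these elements have total area \<open>\<le> 64 \<kappa>\<^sup>2 h\<^sub>E\<^sup>2\<close>.\<close>

lemma sum_element_jump_sum_le:
  assumes ct: "conforming_triangulation Th Om" and sr: "shape_regular \<kappa> Th" and \<kappa>: "\<kappa> > 0"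
    and w: "\<And>h. h > 0 \<Longrightarrow> w h \<ge> 0"
  shows "(\<Sum>T\<in>{T\<in>Th. xi \<in> T}. element_jump_sum Th Om xi u w T * measure lebesgue (convex hull T))
     \<le> (\<Sum>E\<in>edges_at Th Om xi. edge_jump u E * w (edge_len E) * (64 * \<kappa>^2 * (edge_len E)^2))"
proof -
  let ?P = "{T\<in>Th. xi \<in> T}" and ?EA = "edges_at Th Om xi"
  let ?m = "\<lambda>T. measure lebesgue (convex hull T)" and ?c = "\<lambda>E. edge_jump u E * w (edge_len E)"
  have finP: "finite ?P" using conforming_triangulation_finite[OF ct] by simp
  have "(\<Sum>T\<in>?P. element_jump_sum Th Om xi u w T * ?m T)
      = (\<Sum>T\<in>?P. \<Sum>E\<in>?EA. if E \<subseteq> T then ?c E * ?m T else 0)"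
    unfolding element_jump_sum_def
    by (simp add: sum_distrib_right sum.inter_filter[OF finite_edges_at[OF ct]])
       (intro sum.cong refl, simp)
  also have "\<dots> = (\<Sum>E\<in>?EA. ?c E * (\<Sum>T\<in>{T\<in>?P. E \<subseteq> T}. ?m T))"
    by (subst sum.swap) (simp add: sum_distrib_left sum.inter_filter[OF finP, symmetric])
  also have "\<dots> \<le> (\<Sum>E\<in>?EA. ?c E * (64 * \<kappa>^2 * (edge_len E)^2))"
  proof (rule sum_mono, rule mult_left_mono)
    fix E assume E: "E \<in> ?EA"
    have Ee: "E \<in> edges Th" by (rule edges_at_edge[OF E])
    let ?p1 = "fst (edge_ends E)" and ?p2 = "snd (edge_ends E)"
    have "(\<Sum>T\<in>{T\<in>?P. E \<subseteq> T}. ?m T) \<le> (\<Sum>T\<in>{T\<in>Th. {?p1, ?p2} \<subseteq> T}. ?m T)"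
      by (rule sum_mono2) (use conforming_triangulation_finite[OF ct] edge_ends[OF Ee] in auto)
    also have "\<dots> \<le> 64 * \<kappa>^2 * (edge_len E)^2"
      using measure_elements_at_edge_le[OF ct sr edge_ends_neq[OF Ee] \<kappa>] edge_len_eq_dist[OF Ee] by simp
    finally show "(\<Sum>T\<in>{T\<in>?P. E \<subseteq> T}. ?m T) \<le> 64 * \<kappa>^2 * (edge_len E)^2" .
    show "0 \<le> ?c E" using w edge_len_pos[OF Ee] edge_jump_nonneg by simp
  qed
  finally show ?thesis by (simp add: mult.assoc)
qed

lemma nodal_basis_off_patch:
  assumes ct: "conforming_triangulation Th Om" and T: "T \<in> Th" "xi \<notin> T"
    and x: "x \<in> interior (convex hull T)"
  shows "nodal_basis Th xi x = 0" "grad_at (nodal_basis Th xi) x = 0"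
proof -
  obtain a c where a: "\<forall>y\<in>convex hull T. nodal_basis Th xi y = a \<bullet> y + c"
    using Vh_affine_on_element[OF nodal_basis_Vh[OF ct] T(1)] .
  have "\<forall>v\<in>T. 0 \<le> nodal_basis Th xi v \<and> nodal_basis Th xi v \<le> 0"
    using T node_of_element[OF T(1)] by (auto simp: nodal_basis_node[OF ct])
  from affine_bounds_on_convex_hull[OF a this]
  have z: "\<forall>y\<in>convex hull T. nodal_basis Th xi y = 0 \<bullet> y + 0" by force
  show "grad_at (nodal_basis Th xi) x = 0" by (rule grad_at_affine[OF x z])
  show "nodal_basis Th xi x = 0" using z x interior_subset by auto
qed

lemma element_local_bounds:
  assumes ct: "conforming_triangulation Th Om"
    and T: "T \<in> Th" "T = {xi, j, k}" "xi \<noteq> j" "xi \<noteq> k"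
    and u: "u \<in> Vh Th" and min: "\<forall>x\<in>patch Th xi. u xi \<le> u x"
    and ball: "ball c r \<subseteq> convex hull T" "r > 0" and x: "x \<in> interior (convex hull T)"
  defines "D \<equiv> \<bar>u j - u xi\<bar> + \<bar>u k - u xi\<bar>"
  shows "0 \<le> nodal_basis Th xi x \<and> nodal_basis Th xi x \<le> 1"
    and "0 \<le> u x - u xi \<and> u x - u xi \<le> D"
    and "r * norm (grad_at u x) \<le> D"
    and "r * norm (grad_at (nodal_basis Th xi) x) \<le> 1"
proof -
  let ?psi = "nodal_basis Th xi"
  have xT: "x \<in> convex hull T" using x interior_subset by blast
  obtain a c0 where a: "\<forall>y\<in>convex hull T. u y = a \<bullet> y + c0"
    using Vh_affine_on_element[OF u T(1)] .
  obtain a' c' where a': "\<forall>y\<in>convex hull T. ?psi y = a' \<bullet> y + c'"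
    using Vh_affine_on_element[OF nodal_basis_Vh[OF ct] T(1)] .
  have "u xi \<le> u v" if "v \<in> T" for v
    using min element_in_patch[OF T(1)] hull_inc[OF that] T(2) by blast
  then have "u xi \<le> u j" "u xi \<le> u k" using T(2) by auto
  then have ubd: "\<forall>y\<in>convex hull T. u xi \<le> u y \<and> u y \<le> u xi + D"
    by (intro affine_bounds_on_convex_hull[OF a]) (auto simp: T(2) D_def)
  have pbd: "\<forall>y\<in>convex hull T. 0 \<le> ?psi y \<and> ?psi y \<le> 1"
    using node_of_element[OF T(1)]
    by (intro affine_bounds_on_convex_hull[OF a']) (auto simp: nodal_basis_node[OF ct])
  show "0 \<le> ?psi x \<and> ?psi x \<le> 1" "0 \<le> u x - u xi \<and> u x - u xi \<le> D"
    using ubd pbd xT by auto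
  show "r * norm (grad_at u x) \<le> D"
    using norm_affine_coeff_le_oscillation[OF ball a ubd] grad_at_affine[OF x a] by simp
  show "r * norm (grad_at ?psi x) \<le> 1"
    using norm_affine_coeff_le_oscillation[OF ball a' pbd] grad_at_affine[OF x a'] by simp
qed

text \<open>Shape regularity turns \<open>1/r\<close> for the inscribed ball into \<open>2\<kappa>/h\<^sub>E\<close> for both edges of
  \<open>T\<close> at \<open>x\<^sub>i\<close>.\<close>

lemma element_estimates:
  assumes ct: "conforming_triangulation Th Om" and sr: "shape_regular \<kappa> Th"
    and T: "T \<in> Th" "xi \<in> T" and Om: "xi \<in> Om" "open Om"
    and u: "u \<in> Vh Th" and min: "\<forall>x\<in>patch Th xi. u xi \<le> u x"
    and x: "x \<in> interior (convex hull T)"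
  shows "norm (grad_at u x) \<le> element_jump_sum Th Om xi u (\<lambda>h. 2 * \<kappa> / h) T"
    and "grad_at u x \<bullet> grad_at (nodal_basis Th xi) x
           \<le> element_jump_sum Th Om xi u (\<lambda>h. 4 * \<kappa>^2 / h^2) T"
    and "0 \<le> nodal_basis Th xi x \<and> nodal_basis Th xi x \<le> 1"
    and "(u x - u xi) * nodal_basis Th xi x \<le> element_jump_sum Th Om xi u (\<lambda>h. 1) T"
proof -
  have tri: "is_triangle T" using conforming_triangulation_triangle[OF ct T(1)] .
  obtain j k where jk: "T = {xi, j, k}" "xi \<noteq> j" "xi \<noteq> k" "j \<noteq> k"
    using triangle_vertices[OF tri T(2)] by blast
  have "diameter (convex hull T) \<le> \<kappa> * inradius T" using sr T(1) by (simp add: shape_regular_def)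
  then obtain c r where r: "r > 0" "ball c r \<subseteq> convex hull T" "diameter (convex hull T) \<le> 2 * \<kappa> * r"
    by (rule shape_regular_inscribed_ball[OF tri])
  have "0 \<le> (2 * \<kappa>) * r" using r(3) diameter_ge_0[OF bounded_convex_hull_triangle[OF tri]] by simp
  then have "\<kappa> \<ge> 0" using r(1) by (simp add: zero_le_mult_iff)
  have inv_r: "1 / r \<le> 2 * \<kappa> / dist xi v" if "v \<in> T" "v \<noteq> xi" for v
  proof -
    have "dist xi v \<le> 2 * \<kappa> * r"
      using diameter_bounded_bound[OF bounded_convex_hull_triangle[OF tri]] hull_inc T(2) that(1) r(3)
      by (meson order_trans)
    then show ?thesis using that(2) r(1) by (simp add: field_simps)
  qed
  define Dj Dk where "Dj = \<bar>u j - u xi\<bar>" and "Dk = \<bar>u k - u xi\<bar>"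
  note L = element_local_bounds[OF ct T(1) jk(1-3) u min r(2,1) x, folded Dj_def Dk_def]
  note two_edges = element_jump_sum_ge_two_edges[OF T(1) jk Om ct, of _ u, folded Dj_def Dk_def]
  have ru: "norm (grad_at u x) \<le> Dj * (1/r) + Dk * (1/r)"
    using L(3) r(1) by (simp add: field_simps)
  also have "\<dots> \<le> Dj * (2 * \<kappa> / dist xi j) + Dk * (2 * \<kappa> / dist xi k)"
    using inv_r jk by (intro add_mono mult_left_mono) (auto simp: Dj_def Dk_def)
  also have "\<dots> \<le> element_jump_sum Th Om xi u (\<lambda>h. 2 * \<kappa> / h) T"
    using \<open>\<kappa> \<ge> 0\<close> by (intro two_edges) simp
  finally show "norm (grad_at u x) \<le> element_jump_sum Th Om xi u (\<lambda>h. 2 * \<kappa> / h) T" .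
  have "grad_at u x \<bullet> grad_at (nodal_basis Th xi) x \<le> norm (grad_at u x) * norm (grad_at (nodal_basis Th xi) x)"
    by (rule order_trans[OF abs_ge_self Cauchy_Schwarz_ineq2])
  also have "\<dots> \<le> (Dj * (1/r) + Dk * (1/r)) * (1/r)"
    using ru L(4) r(1) by (intro mult_mono) (auto simp: field_simps Dj_def Dk_def)
  also have "\<dots> = Dj * (1/r)^2 + Dk * (1/r)^2" by (simp add: power2_eq_square algebra_simps)
  also have "\<dots> \<le> Dj * (2 * \<kappa> / dist xi j)^2 + Dk * (2 * \<kappa> / dist xi k)^2"
    using inv_r jk r(1) by (intro add_mono mult_left_mono power_mono) (auto simp: Dj_def Dk_def)
  also have "\<dots> \<le> element_jump_sum Th Om xi u (\<lambda>h. 4 * \<kappa>^2 / h^2) T"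
    using two_edges[of "\<lambda>h. 4 * \<kappa>^2 / h^2"] by (simp add: power_divide power_mult_distrib)
  finally show "grad_at u x \<bullet> grad_at (nodal_basis Th xi) x
      \<le> element_jump_sum Th Om xi u (\<lambda>h. 4 * \<kappa>^2 / h^2) T" .
  show "0 \<le> nodal_basis Th xi x \<and> nodal_basis Th xi x \<le> 1" by (rule L(1))
  have "(u x - u xi) * nodal_basis Th xi x \<le> (Dj + Dk) * 1"
    using L(1,2) by (intro mult_mono) auto
  also have "\<dots> \<le> element_jump_sum Th Om xi u (\<lambda>h. 1) T"
    using two_edges[of "\<lambda>h. 1"] by simp
  finally show "(u x - u xi) * nodal_basis Th xi x \<le> element_jump_sum Th Om xi u (\<lambda>h. 1) T" .
qed

lemma diffusion_term_le:
  assumes ct: "conforming_triangulation Th Om" and sr: "shape_regular \<kappa> Th" and \<kappa>: "\<kappa> > 0"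
    and Om: "xi \<in> Om" "open Om" and u: "u \<in> Vh Th" and min: "\<forall>x\<in>patch Th xi. u xi \<le> u x"
  shows "set_lebesgue_integral lebesgue Om (\<lambda>x. grad_at u x \<bullet> grad_at (nodal_basis Th xi) x)
           \<le> (\<Sum>E\<in>edges_at Th Om xi. 256 * \<kappa>^4 * edge_jump u E)"
proof -
  let ?K = "element_jump_sum Th Om xi u (\<lambda>h. 4 * \<kappa>^2 / h^2)"
  have "set_lebesgue_integral lebesgue Om (\<lambda>x. grad_at u x \<bullet> grad_at (nodal_basis Th xi) x)
      \<le> (\<Sum>T\<in>{T\<in>Th. xi \<in> T}. ?K T * measure lebesgue (convex hull T))"
  proof (rule set_integral_le_element_sum[OF ct])
    show "?K T \<ge> 0" for T by (rule element_jump_sum_nonneg) simp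
    show "AE x in lebesgue. x \<in> Om \<longrightarrow> (\<forall>T\<in>Th. x \<in> interior (convex hull T) \<longrightarrow>
        grad_at u x \<bullet> grad_at (nodal_basis Th xi) x \<le> (if T \<in> {T\<in>Th. xi \<in> T} then ?K T else 0))"
      using element_estimates(2)[OF ct sr _ _ Om u min] nodal_basis_off_patch(2)[OF ct] by auto
  qed auto
  also have "\<dots> \<le> (\<Sum>E\<in>edges_at Th Om xi. edge_jump u E * (4 * \<kappa>^2 / (edge_len E)^2) * (64 * \<kappa>^2 * (edge_len E)^2))"
    by (rule sum_element_jump_sum_le[OF ct sr \<kappa>]) simp
  also have "\<dots> = (\<Sum>E\<in>edges_at Th Om xi. 256 * \<kappa>^4 * edge_jump u E)"
    by (intro sum.cong refl) (use edge_len_pos in \<open>force dest: edges_at_edge simp: field_simps power4_eq_xxxx power2_eq_square\<close>)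
  finally show ?thesis .
qed

lemma convection_term_le:
  assumes ct: "conforming_triangulation Th Om" and sr: "shape_regular \<kappa> Th" and \<kappa>: "\<kappa> > 0"
    and Om: "xi \<in> Om" "open Om" and u: "u \<in> Vh Th" and min: "\<forall>x\<in>patch Th xi. u xi \<le> u x"
    and b: "Linf_field Om b"
  shows "set_lebesgue_integral lebesgue Om (\<lambda>x. (b x \<bullet> grad_at u x) * nodal_basis Th xi x)
           \<le> Linf_norm Om b * (\<Sum>E\<in>edges_at Th Om xi. 128 * \<kappa>^3 * edge_len E * edge_jump u E)"
proof -
  let ?B = "Linf_norm Om b" and ?K = "element_jump_sum Th Om xi u (\<lambda>h. 2 * \<kappa> / h)"
  have B: "?B \<ge> 0" "AE x in lebesgue. x \<in> Om \<longrightarrow> norm (b x) \<le> ?B"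
    using Linf_norm_nonneg[OF Om(2) _ b] AE_norm_le_Linf_norm[OF Om(2) _ b] Om(1) by auto
  have pointwise: "(b x \<bullet> grad_at u x) * nodal_basis Th xi x \<le> ?B * ?K T"
    if "norm (b x) \<le> ?B" "T \<in> Th" "xi \<in> T" "x \<in> interior (convex hull T)" for x T
  proof -
    note est = element_estimates[OF ct sr that(2,3) Om u min that(4)]
    have "(b x \<bullet> grad_at u x) * nodal_basis Th xi x \<le> \<bar>b x \<bullet> grad_at u x\<bar> * nodal_basis Th xi x"
      using est(3) by (intro mult_right_mono) auto
    also have "\<dots> \<le> \<bar>b x \<bullet> grad_at u x\<bar>" using est(3) by (intro mult_left_le) auto
    also have "\<dots> \<le> norm (b x) * norm (grad_at u x)" by (rule Cauchy_Schwarz_ineq2)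
    also have "\<dots> \<le> ?B * ?K T" using that(1) est(1) B(1) by (intro mult_mono) auto
    finally show ?thesis .
  qed
  have "set_lebesgue_integral lebesgue Om (\<lambda>x. (b x \<bullet> grad_at u x) * nodal_basis Th xi x)
      \<le> (\<Sum>T\<in>{T\<in>Th. xi \<in> T}. (?B * ?K T) * measure lebesgue (convex hull T))"
  proof (rule set_integral_le_element_sum[OF ct])
    show "?B * ?K T \<ge> 0" for T using B(1) \<kappa> element_jump_sum_nonneg[of "\<lambda>h. 2 * \<kappa> / h"] by simp
    show "AE x in lebesgue. x \<in> Om \<longrightarrow> (\<forall>T\<in>Th. x \<in> interior (convex hull T) \<longrightarrow>
        (b x \<bullet> grad_at u x) * nodal_basis Th xi x \<le> (if T \<in> {T\<in>Th. xi \<in> T} then ?B * ?K T else 0))"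
      using B(2) by eventually_elim (use pointwise nodal_basis_off_patch(1)[OF ct] in auto)
  qed auto
  also have "\<dots> = ?B * (\<Sum>T\<in>{T\<in>Th. xi \<in> T}. ?K T * measure lebesgue (convex hull T))"
    by (simp add: sum_distrib_left mult.assoc)
  also have "\<dots> \<le> ?B * (\<Sum>E\<in>edges_at Th Om xi. edge_jump u E * (2 * \<kappa> / edge_len E) * (64 * \<kappa>^2 * (edge_len E)^2))"
    using \<kappa> by (intro mult_left_mono[OF sum_element_jump_sum_le[OF ct sr \<kappa>] B(1)]) simp
  also have "(\<Sum>E\<in>edges_at Th Om xi. edge_jump u E * (2 * \<kappa> / edge_len E) * (64 * \<kappa>^2 * (edge_len E)^2))
      = (\<Sum>E\<in>edges_at Th Om xi. 128 * \<kappa>^3 * edge_len E * edge_jump u E)"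
    by (intro sum.cong refl)
       (use edge_len_pos in \<open>force dest: edges_at_edge simp: field_simps power3_eq_cube power2_eq_square\<close>)
  finally show ?thesis .
qed

lemma reaction_term_le:
  assumes ct: "conforming_triangulation Th Om" and sr: "shape_regular \<kappa> Th" and \<kappa>: "\<kappa> > 0"
    and Om: "xi \<in> Om" "open Om" and u: "u \<in> Vh Th" and min: "\<forall>x\<in>patch Th xi. u xi \<le> u x"
    and neg: "u xi < 0"
  shows "set_lebesgue_integral lebesgue Om (\<lambda>x. u x * nodal_basis Th xi x)
           \<le> (\<Sum>E\<in>edges_at Th Om xi. 64 * \<kappa>^2 * (edge_len E)^2 * edge_jump u E)"
proof -
  let ?K = "element_jump_sum Th Om xi u (\<lambda>h. 1)"
  have pointwise: "u x * nodal_basis Th xi x \<le> ?K T"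
    if "T \<in> Th" "xi \<in> T" "x \<in> interior (convex hull T)" for x T
  proof -
    note est = element_estimates[OF ct sr that(1,2) Om u min that(3)]
    have "u x * nodal_basis Th xi x \<le> (u x - u xi) * nodal_basis Th xi x"
      using mult_nonpos_nonneg[of "u xi" "nodal_basis Th xi x"] neg est(3) by (simp add: algebra_simps)
    also have "\<dots> \<le> ?K T" by (rule est(4))
    finally show ?thesis .
  qed
  have "set_lebesgue_integral lebesgue Om (\<lambda>x. u x * nodal_basis Th xi x)
      \<le> (\<Sum>T\<in>{T\<in>Th. xi \<in> T}. ?K T * measure lebesgue (convex hull T))"
  proof (rule set_integral_le_element_sum[OF ct])
    show "?K T \<ge> 0" for T by (rule element_jump_sum_nonneg) simp
    show "AE x in lebesgue. x \<in> Om \<longrightarrow> (\<forall>T\<in>Th. x \<in> interior (convex hull T) \<longrightarrow>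
        u x * nodal_basis Th xi x \<le> (if T \<in> {T\<in>Th. xi \<in> T} then ?K T else 0))"
      using pointwise nodal_basis_off_patch(1)[OF ct] by auto
  qed auto
  also have "\<dots> \<le> (\<Sum>E\<in>edges_at Th Om xi. edge_jump u E * 1 * (64 * \<kappa>^2 * (edge_len E)^2))"
    by (rule sum_element_jump_sum_le[OF ct sr \<kappa>]) simp
  finally show ?thesis by (simp add: mult_ac)
qed

lemma bilin_a_nodal_basis_le:
  assumes ct: "conforming_triangulation Th Om" and sr: "shape_regular \<kappa> Th" and \<kappa>: "\<kappa> > 0"
    and Om: "xi \<in> Om" "open Om" and u: "u \<in> Vh Th" and min: "\<forall>x\<in>patch Th xi. u xi \<le> u x"
    and b: "Linf_field Om b" and \<epsilon>: "\<epsilon> \<ge> 0" and \<sigma>: "\<sigma> \<ge> 0" and sign: "u xi < 0 \<or> \<sigma> = 0"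
  shows "bilin_a Om \<epsilon> b \<sigma> u (nodal_basis Th xi)
           \<le> (\<Sum>E\<in>edges_at Th Om xi. (256 * \<kappa>^4 * \<epsilon> + 128 * \<kappa>^3 * Linf_norm Om b * edge_len E
                 + 64 * \<kappa>^2 * \<sigma> * (edge_len E)^2) * edge_jump u E)"
proof -
  have reaction: "\<sigma> * set_lebesgue_integral lebesgue Om (\<lambda>x. u x * nodal_basis Th xi x)
      \<le> \<sigma> * (\<Sum>E\<in>edges_at Th Om xi. 64 * \<kappa>^2 * (edge_len E)^2 * edge_jump u E)"
    using sign mult_left_mono[OF reaction_term_le[OF ct sr \<kappa> Om u min] \<sigma>] by auto
  have "bilin_a Om \<epsilon> b \<sigma> u (nodal_basis Th xi)
      \<le> \<epsilon> * (\<Sum>E\<in>edges_at Th Om xi. 256 * \<kappa>^4 * edge_jump u E)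
        + Linf_norm Om b * (\<Sum>E\<in>edges_at Th Om xi. 128 * \<kappa>^3 * edge_len E * edge_jump u E)
        + \<sigma> * (\<Sum>E\<in>edges_at Th Om xi. 64 * \<kappa>^2 * (edge_len E)^2 * edge_jump u E)"
    unfolding bilin_a_def
    using mult_left_mono[OF diffusion_term_le[OF ct sr \<kappa> Om u min] \<epsilon>]
      convection_term_le[OF ct sr \<kappa> Om u min b] reaction
    by linarith
  also have "\<dots> = (\<Sum>E\<in>edges_at Th Om xi. (256 * \<kappa>^4 * \<epsilon> + 128 * \<kappa>^3 * Linf_norm Om b * edge_len E
                 + 64 * \<kappa>^2 * \<sigma> * (edge_len E)^2) * edge_jump u E)"
    by (simp add: sum_distrib_left sum.distrib[symmetric] algebra_simps)
  finally show ?thesis .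
qed

lemma a_tilde_nodal_basis_le:
  assumes \<kappa>: "\<kappa> > 0" and Om: "open Om" and ct: "conforming_triangulation Th Om"
    and sr: "shape_regular \<kappa> Th" and \<epsilon>: "\<epsilon> \<ge> 0" and b: "Linf_field Om b" and \<sigma>: "\<sigma> \<ge> 0"
    and p: "p \<ge> 1" and \<gamma>0: "\<gamma>0 \<ge> 0" and u: "u \<in> Vh Th" and xi: "xi \<in> interior_nodes Th Om"
    and min: "\<forall>x\<in>patch Th xi. u xi \<le> u x" and sign: "u xi < 0 \<or> \<sigma> = 0"
  shows "a_tilde Th Om \<epsilon> b \<sigma> p \<gamma>0 u (nodal_basis Th xi)
        \<le> - (\<Sum>E\<in>edges_at Th Om xi.
               (\<gamma>0 - 64 * \<kappa>^2 * \<sigma> * edge_len E - 128 * \<kappa>^3 * Linf_norm Om b - 256 * \<kappa>^4 * \<epsilon> / edge_len E)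
               * (edge_len E)^2 * \<bar>tang_deriv E u (edge_midpoint E)\<bar>)"
proof -
  have xi: "xi \<in> nodes Th" "xi \<in> Om" using xi by (auto simp: interior_nodes_def)
  have "(\<gamma>0 - 64 * \<kappa>^2 * \<sigma> * edge_len E - 128 * \<kappa>^3 * Linf_norm Om b - 256 * \<kappa>^4 * \<epsilon> / edge_len E)
          * (edge_len E)^2 * \<bar>tang_deriv E u (edge_midpoint E)\<bar>
      = \<gamma>0 * edge_len E * edge_jump u E - (256 * \<kappa>^4 * \<epsilon> + 128 * \<kappa>^3 * Linf_norm Om b * edge_len E
                 + 64 * \<kappa>^2 * \<sigma> * (edge_len E)^2) * edge_jump u E"
    if "E \<in> edges_at Th Om xi" for E
  proof -
    have E: "E \<in> edges Th" by (rule edges_at_edge[OF that])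
    then have jump: "edge_jump u E = edge_len E * \<bar>tang_deriv E u (edge_midpoint E)\<bar>"
      using tang_deriv_midpoint[OF E u] edge_len_pos[OF E] by (simp add: edge_jump_def abs_div)
    show ?thesis using edge_len_pos[OF E] unfolding jump by (simp add: field_simps power2_eq_square)
  qed
  then have "- (\<Sum>E\<in>edges_at Th Om xi.
               (\<gamma>0 - 64 * \<kappa>^2 * \<sigma> * edge_len E - 128 * \<kappa>^3 * Linf_norm Om b - 256 * \<kappa>^4 * \<epsilon> / edge_len E)
               * (edge_len E)^2 * \<bar>tang_deriv E u (edge_midpoint E)\<bar>)
      = - (\<Sum>E\<in>edges_at Th Om xi. \<gamma>0 * edge_len E * edge_jump u E)
        + (\<Sum>E\<in>edges_at Th Om xi. (256 * \<kappa>^4 * \<epsilon> + 128 * \<kappa>^3 * Linf_norm Om b * edge_len E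
                 + 64 * \<kappa>^2 * \<sigma> * (edge_len E)^2) * edge_jump u E)"
    by (simp add: sum_subtractf)
  then show ?thesis
    unfolding a_tilde_def
    using d_h_nodal_basis_le[OF ct xi(1) u min \<gamma>0 p] bilin_a_nodal_basis_le[OF ct sr \<kappa> xi(2) Om u min b \<epsilon> \<sigma> sign]
    by linarith
qed

theorem mainTheorem7:
  shows "\<forall>\<kappa>>0. \<exists>C0>0. \<exists>C1>0. \<exists>C2>0.
    \<forall>(Om :: pt set) Th \<epsilon> (b :: pt \<Rightarrow> pt) \<sigma> (p :: real) \<gamma>0 u xi.
      open Om \<and> bounded Om \<and> lipschitz_boundary Om \<and>
      conforming_triangulation Th Om \<and> shape_regular \<kappa> Th \<and>
      \<epsilon> > 0 \<and> Linf_field Om b \<and> div_free Om b \<and> \<sigma> \<ge> 0 \<and>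
      p \<ge> 1 \<and> \<gamma>0 > 0 \<and>
      (\<forall>E\<in>interior_edges Th Om.
         \<gamma>0 \<ge> C0 * \<sigma> * edge_len E + C1 * Linf_norm Om b + C2 * \<epsilon> / edge_len E) \<and>
      u \<in> Vh Th \<and> xi \<in> interior_nodes Th Om \<and>
      (\<forall>x\<in>patch Th xi. u xi \<le> u x) \<and> (u xi < 0 \<or> \<sigma> = 0)
      \<longrightarrow>
      a_tilde Th Om \<epsilon> b \<sigma> p \<gamma>0 u (nodal_basis Th xi)
        \<le> - (\<Sum>E\<in>edges_at Th Om xi.
               (\<gamma>0 - C0 * \<sigma> * edge_len E - C1 * Linf_norm Om b - C2 * \<epsilon> / edge_len E)
               * (edge_len E)^2 * \<bar>tang_deriv E u (edge_midpoint E)\<bar>)"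
  apply (intro allI impI)
  subgoal for \<kappa>
    apply (rule exI[of _ "64 * \<kappa>^2"], rule conjI, simp)
    apply (rule exI[of _ "128 * \<kappa>^3"], rule conjI, simp)
    apply (rule exI[of _ "256 * \<kappa>^4"], rule conjI, simp)
    by (intro allI impI, elim conjE, intro a_tilde_nodal_basis_le) auto
  done

end
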